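(* Let $h\in\mathbb N$, $i\in[h-1]$, and $u,v\in\mathfrak S_n$ with $u<v$. Let $F$ be an $h$-flipclass of paths from $u$ to $v$. For any two vertices $(x,i-1)$ and $(y,i+1)$ of $TS_F$, the number of paths of length $2$ from $(x,i-1)$ to $(y,i+1)$ in $TS_F$ is $0$, $1$, or $2$.
   Context: $\mathfrak S_n$ is the symmetric group on $[n]$, $T$ its transpositions, $\ell$ the length w.r.t. simple transpositions. The Bruhat graph $B(\mathfrak S_n)$ has an edge $x\xrightarrow{t}y$ iff $yx^{-1}=t\in T$ and $\ell(x)<\ell(y)$; Bruhat order: $x\le y$ iff there is a directed path from $x$ to $y$. $P_h(u,v)$ is the set of paths $u=x_0\to\cdots\to x_h=v$ of length $h$. Between two fixed vertices there are $0$ or $2$ paths of length $2$, each the flip of the other; the $i$-th flip operator $f_i$ on $P_h(u,v)$ replaces $x_{i-1}\to x_i\to x_{i+1}$ by its flip; the orbits of $\langle f_1,\dots,f_{h-1}\rangle$ on $P_h(u,v)$ are the $h$-flipclasses of paths from $u$ to $v$. The time-support graph $TS_F$ has vertices $(a,j)$ ($0\le j\le h$) such that some path $(x_0,\dots,x_h)\in F$ has $x_j=a$, and edges $(a,j)\xrightarrow{t}(b,j+1)$ whenever some path of $F$ contains the edge $x_j=a\xrightarrow{t}b=x_{j+1}$. *)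

theory Defs
  imports "HOL-Combinatorics.Permutations" "HOL-Combinatorics.Transposition"
begin

definition Sym :: "nat \<Rightarrow> (nat \<Rightarrow> nat) set" where
  "Sym n = {x. x permutes {1..n}}"

definition transpositions :: "nat \<Rightarrow> (nat \<Rightarrow> nat) set" where
  "transpositions n = {transpose a b | a b. a \<in> {1..n} \<and> b \<in> {1..n} \<and> a \<noteq> b}"

definition simple_transpositions :: "nat \<Rightarrow> (nat \<Rightarrow> nat) set" where
  "simple_transpositions n = {transpose i (i + 1) | i. 1 \<le> i \<and> i < n}"

definition len :: "nat \<Rightarrow> (nat \<Rightarrow> nat) \<Rightarrow> nat" where
  "len n x = (LEAST k. \<exists>ss. length ss = k \<and> set ss \<subseteq> simple_transpositions n
                              \<and> x = foldr (\<circ>) ss id)"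

definition bruhat_edge :: "nat \<Rightarrow> (nat \<Rightarrow> nat) \<Rightarrow> (nat \<Rightarrow> nat) \<Rightarrow> bool" where
  "bruhat_edge n x y \<longleftrightarrow> x \<in> Sym n \<and> y \<in> Sym n \<and>
     y \<circ> inv x \<in> transpositions n \<and> len n x < len n y"

definition bruhat_less :: "nat \<Rightarrow> (nat \<Rightarrow> nat) \<Rightarrow> (nat \<Rightarrow> nat) \<Rightarrow> bool" where
  "bruhat_less n u v \<longleftrightarrow> (bruhat_edge n)\<^sup>+\<^sup>+ u v"

definition paths :: "nat \<Rightarrow> nat \<Rightarrow> (nat \<Rightarrow> nat) \<Rightarrow> (nat \<Rightarrow> nat) \<Rightarrow> (nat \<Rightarrow> nat) list set" where
  "paths n h u v = {p. length p = h + 1 \<and> p ! 0 = u \<and> p ! h = v \<and>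
                      (\<forall>j<h. bruhat_edge n (p ! j) (p ! (j + 1)))}"

definition flip_step :: "nat \<Rightarrow> nat \<Rightarrow> (nat \<Rightarrow> nat) \<Rightarrow> (nat \<Rightarrow> nat) \<Rightarrow>
     (nat \<Rightarrow> nat) list \<Rightarrow> (nat \<Rightarrow> nat) list \<Rightarrow> bool" where
  "flip_step n h u v p q \<longleftrightarrow> p \<in> paths n h u v \<and>
     (\<exists>i z. 1 \<le> i \<and> i \<le> h - 1 \<and> z \<noteq> p ! i \<and>
        bruhat_edge n (p ! (i - 1)) z \<and> bruhat_edge n z (p ! (i + 1)) \<and>
        q = p[i := z])"

definition flipclass :: "nat \<Rightarrow> nat \<Rightarrow> (nat \<Rightarrow> nat) \<Rightarrow> (nat \<Rightarrow> nat) \<Rightarrow>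
     (nat \<Rightarrow> nat) list set \<Rightarrow> bool" where
  "flipclass n h u v F \<longleftrightarrow>
     (\<exists>p \<in> paths n h u v. F = {q. (flip_step n h u v)\<^sup>*\<^sup>* p q})"

definition ts_vertex :: "nat \<Rightarrow> (nat \<Rightarrow> nat) list set \<Rightarrow> (nat \<Rightarrow> nat) \<times> nat \<Rightarrow> bool" where
  "ts_vertex h F aj \<longleftrightarrow> snd aj \<le> h \<and> (\<exists>p\<in>F. p ! snd aj = fst aj)"

definition ts_edge :: "nat \<Rightarrow> (nat \<Rightarrow> nat) list set \<Rightarrow>
     (nat \<Rightarrow> nat) \<times> nat \<Rightarrow> (nat \<Rightarrow> nat) \<times> nat \<Rightarrow> bool" where
  "ts_edge h F aj bk \<longleftrightarrow> snd aj < h \<and> snd bk = snd aj + 1 \<and>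
     (\<exists>p\<in>F. p ! snd aj = fst aj \<and> p ! snd bk = fst bk)"

end

theory Submission
  imports Defs
begin

text \<open>
  A length-2 path of \<open>TS_F\<close> from \<open>(x, i - 1)\<close> to \<open>(y, i + 1)\<close> runs through some \<open>z\<close> with
  \<open>x \<rightarrow> z \<rightarrow> y\<close> in the Bruhat graph, so it suffices to see that there are at most two such \<open>z\<close>.
  The length of \<open>w\<close> is the number of inversions of \<open>w\<^sup>-\<^sup>1\<close>, hence for \<open>a < b\<close> the edge
  \<open>w \<rightarrow> (a b) w\<close> goes up iff \<open>w\<^sup>-\<^sup>1 a < w\<^sup>-\<^sup>1 b\<close>. A middle vertex \<open>z = (a b) x\<close> therefore
  yields a factorisation \<open>y x\<^sup>-\<^sup>1 = (c d)(a b)\<close> of the fixed permutation \<open>g = y x\<^sup>-\<^sup>1\<close>, and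
  \<open>z\<close> is determined by \<open>(a, b)\<close>. If the two transpositions are disjoint, \<open>g\<close> is an involution
  and \<open>(a b)\<close> must be one of its two 2-cycles. Otherwise \<open>g\<close> is a 3-cycle on some
  \<open>\<alpha> < \<beta> < \<gamma>\<close>; the candidates are \<open>(\<alpha> \<beta>)\<close>, \<open>(\<beta> \<gamma>)\<close>, \<open>(\<alpha> \<gamma>)\<close>, and if the first
  two start ascending paths then \<open>(\<alpha> \<gamma>)\<close> cannot.
\<close>

lemma transpose_comp_transpose_moves:
  fixes a b c d :: nat
  assumes "a < b" "c < d" "(c, d) \<noteq> (a, b)" "g = transpose c d \<circ> transpose a b"
  shows "g a \<noteq> a" "g b \<noteq> b"
  using assms by (auto simp: transpose_def split: if_splits)

lemma transpose_comp_transpose_support: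
  "g = transpose c d \<circ> transpose a b \<Longrightarrow> g q \<noteq> q \<Longrightarrow> q \<in> {a, b, c, d}"
  by (auto simp: transpose_def split: if_splits)

lemma transpose_comp_transpose_involution:
  fixes a b c d :: nat
  assumes "a < b" "c < d" "(c, d) \<noteq> (a, b)" "g = transpose c d \<circ> transpose a b"
    and "g (g a) = a"
  shows "g a = b"
  using assms by (auto simp: transpose_def split: if_splits)

lemma three_cycle_second_factor:
  fixes \<alpha> \<beta> \<gamma> c d :: nat
  assumes "\<alpha> < \<beta>" "\<beta> < \<gamma>" "c < d" "(c, d) \<noteq> (\<alpha>, \<gamma>)"
    and "g = transpose c d \<circ> transpose \<alpha> \<gamma>" and "\<And>q. g q \<noteq> q \<Longrightarrow> q \<in> {\<alpha>, \<beta>, \<gamma>}"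
  shows "(c, d) = (\<alpha>, \<beta>) \<or> (c, d) = (\<beta>, \<gamma>)"
proof -
  have "c \<in> {\<alpha>, \<beta>, \<gamma>}" "d \<in> {\<alpha>, \<beta>, \<gamma>}"
    using assms(3,5) assms(6)[of c] assms(6)[of d] by (auto simp: transpose_def split: if_splits)
  then show ?thesis using assms(1-4) by auto
qed

lemma card_3_sorted:
  fixes S :: "'a::linorder set"
  assumes "card S = 3"
  obtains \<alpha> \<beta> \<gamma> where "\<alpha> < \<beta>" "\<beta> < \<gamma>" "S = {\<alpha>, \<beta>, \<gamma>}"
proof -
  obtain x y z where S: "S = {x, y, z}" "x \<noteq> y" "y \<noteq> z" "x \<noteq> z"
    using assms unfolding card_3_iff by blast
  show ?thesis
    using S that by (cases x y rule: linorder_cases; cases y z rule: linorder_cases;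
        cases x z rule: linorder_cases) (auto simp: insert_commute)
qed

definition inversions :: "nat \<Rightarrow> (nat \<Rightarrow> nat) \<Rightarrow> (nat \<times> nat) set" where
  "inversions n r = {(c, d). c \<in> {1..n} \<and> d \<in> {1..n} \<and> c < d \<and> r d < r c}"

lemma finite_inversions: "finite (inversions n r)"
  by (rule finite_subset[of _ "{1..n} \<times> {1..n}"]) (auto simp: inversions_def)

lemma card_inversions_less_transpose:
  assumes ab: "a < b" "a \<in> {1..n}" "b \<in> {1..n}" and r: "r a < r b"
  shows "card (inversions n r) < card (inversions n (r \<circ> transpose a b))"
proof -
  define t where "t = transpose a b"
  \<comment> \<open>\<open>f\<close> moves an inversion of \<open>r\<close> by \<open>t\<close> unless \<open>t\<close> reverses its order, in which case the
    pair itself is an inversion of \<open>r \<circ> t\<close>; the extra inversion \<open>(a, b)\<close> is never hit.\<close>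
  define f where "f = (\<lambda>(c, d). if t c < t d then (t c, t d) else (c, d))"
  have tt: "t (t q) = q" for q
    by (simp add: t_def)
  have "inj_on f (inversions n r)"
  proof (rule inj_onI, clarify)
    fix c d c' d'
    assume "(c, d) \<in> inversions n r" "(c', d') \<in> inversions n r" "f (c, d) = f (c', d')"
    then show "c = c' \<and> d = d'"
      using tt by (auto simp: f_def inversions_def split: if_splits) metis+
  qed
  moreover have "f ` inversions n r \<subseteq> inversions n (r \<circ> t) - {(a, b)}"
    using ab r by (auto simp: f_def inversions_def t_def transpose_def split: if_splits)
  ultimately have "card (inversions n r) \<le> card (inversions n (r \<circ> t) - {(a, b)})"
    by (metis card_image card_mono finite_Diff finite_inversions)
  moreover have "(a, b) \<in> inversions n (r \<circ> t)"
    using ab r by (auto simp: inversions_def t_def)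
  ultimately show ?thesis
    unfolding t_def by (metis card_Diff1_less finite_inversions le_less_trans)
qed

lemma card_inversions_simple_transpose_le:
  assumes k: "1 \<le> k" "k < n"
  shows "card (inversions n (r \<circ> transpose k (k + 1))) \<le> card (inversions n r) + 1"
proof -
  define s where "s = transpose k (k + 1)"
  have "inversions n (r \<circ> s) \<subseteq> insert (k, k + 1) ((\<lambda>(c, d). (s c, s d)) ` inversions n r)"
  proof
    fix x
    assume x: "x \<in> inversions n (r \<circ> s)"
    obtain c d where x_eq: "x = (c, d)"
      by fastforce
    show "x \<in> insert (k, k + 1) ((\<lambda>(c, d). (s c, s d)) ` inversions n r)"
    proof (cases "x = (k, k + 1)")
      case False
      then have "s c < s d" "s c \<in> {1..n}" "s d \<in> {1..n}"
        using x k by (auto simp: x_eq inversions_def s_def transpose_def)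
      then have "(s c, s d) \<in> inversions n r"
        using x by (simp add: x_eq inversions_def)
      moreover have "x = (s (s c), s (s d))"
        by (simp add: x_eq s_def)
      ultimately show ?thesis
        by (intro insertI2 image_eqI[of _ _ "(s c, s d)"]) simp_all
    qed simp
  qed
  then have "card (inversions n (r \<circ> s))
      \<le> card (insert (k, k + 1) ((\<lambda>(c, d). (s c, s d)) ` inversions n r))"
    by (intro card_mono) (simp_all add: finite_inversions)
  also have "\<dots> \<le> card (inversions n r) + 1"
    using card_image_le[OF finite_inversions, of "\<lambda>(c, d). (s c, s d)" n r]
    by (simp add: card_insert_if finite_inversions)
  finally show ?thesis
    unfolding s_def .
qed

lemma foldr_comp_Cons: "foldr (\<circ>) (s # ss) id = s \<circ> foldr (\<circ>) ss id"
  by simp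

lemma word_permutes:
  assumes "set ss \<subseteq> simple_transpositions n"
  shows "foldr (\<circ>) ss id permutes {1..n}"
  using assms
proof (induction ss)
  case (Cons s ss)
  then have "s permutes {1..n}"
    by (auto simp: simple_transpositions_def intro: permutes_swap_id)
  moreover have "foldr (\<circ>) ss id permutes {1..n}"
    using Cons.prems by (intro Cons.IH) simp
  ultimately show ?case
    unfolding foldr_comp_Cons by (rule permutes_compose[rotated])
qed simp

lemma card_inversions_word_le:
  assumes "set ss \<subseteq> simple_transpositions n"
  shows "card (inversions n (inv (foldr (\<circ>) ss id))) \<le> length ss"
  using assms
proof (induction ss)
  case Nil
  have "inversions n id = {}"
    by (auto simp: inversions_def)
  then show ?case
    by (simp add: id_def)
next
  case (Cons s ss)
  obtain k where k: "1 \<le> k" "k < n" "s = transpose k (k + 1)"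
    using Cons.prems by (auto simp: simple_transpositions_def)
  have ss: "set ss \<subseteq> simple_transpositions n"
    using Cons.prems by simp
  have inv_eq: "inv (foldr (\<circ>) (s # ss) id) = inv (foldr (\<circ>) ss id) \<circ> s"
    unfolding foldr_comp_Cons
    using o_inv_distrib[OF _ permutes_bij[OF word_permutes[OF ss]], of s] k(3) by simp
  show ?case
    using card_inversions_simple_transpose_le[OF k(1,2), of "inv (foldr (\<circ>) ss id)", folded k(3)]
      Cons.IH[OF ss]
    unfolding inv_eq length_Cons by linarith
qed

lemma permutes_ascending_eq_id:
  fixes r :: "nat \<Rightarrow> nat"
  assumes r: "r permutes {1..n}" and asc: "\<And>k. 1 \<le> k \<Longrightarrow> k < n \<Longrightarrow> r k \<le> r (Suc k)"
  shows "r = id"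
proof -
  have ge: "k \<le> r k" if "k \<in> {1..n}" for k
    using that
  proof (induction k)
    case (Suc k)
    show ?case
    proof (cases "k = 0")
      case True
      then show ?thesis
        using permutes_in_image[OF r] Suc.prems by auto
    next
      case False
      have "r k \<noteq> r (Suc k)"
        using permutes_inj[OF r] by (metis injD n_not_Suc_n)
      then show ?thesis
        using Suc False asc[of k] by auto
    qed
  qed simp
  have "sum id {1..n} = sum r {1..n}"
    using sum.permute[OF r, of id] by simp
  then have "r k = k" if "k \<in> {1..n}" for k
    using ge sum_strict_mono_ex1[of "{1..n}" id r] that
    by (metis finite_atLeastAtMost id_apply le_neq_implies_less less_irrefl)
  then show ?thesis
    using permutes_not_in[OF r] by fastforce
qed

lemma exists_word_le_card_inversions:
  assumes "w permutes {1..n}"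
  shows "\<exists>ss. set ss \<subseteq> simple_transpositions n \<and> w = foldr (\<circ>) ss id
    \<and> length ss \<le> card (inversions n (inv w))"
  using assms
proof (induction "card (inversions n (inv w))" arbitrary: w rule: less_induct)
  case less
  show ?case
  proof (cases "\<exists>k. 1 \<le> k \<and> k < n \<and> inv w (Suc k) < inv w k")
    case True
    then obtain k where k: "1 \<le> k" "k < n" "inv w (Suc k) < inv w k"
      by blast
    define s where "s = transpose k (Suc k)"
    have s: "s permutes {1..n}" "s \<in> simple_transpositions n"
      using k by (auto simp: s_def simple_transpositions_def intro: permutes_swap_id)
    have inv_sw: "inv (s \<circ> w) = inv w \<circ> s"
      using o_inv_distrib[OF permutes_bij[OF s(1)] permutes_bij[OF less.prems]]
      by (simp add: s_def)
    have "card (inversions n (inv w \<circ> s))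
        < card (inversions n (inv w \<circ> s \<circ> transpose k (Suc k)))"
      by (rule card_inversions_less_transpose) (use k in \<open>auto simp: s_def\<close>)
    then have "card (inversions n (inv (s \<circ> w))) < card (inversions n (inv w))"
      unfolding inv_sw by (simp add: s_def comp_assoc)
    then obtain ss where ss: "set ss \<subseteq> simple_transpositions n" "s \<circ> w = foldr (\<circ>) ss id"
        "length ss \<le> card (inversions n (inv (s \<circ> w)))"
      using less.hyps permutes_compose[OF less.prems s(1)] by blast
    have "w = foldr (\<circ>) (s # ss) id"
      by (simp add: ss(2)[symmetric] s_def flip: comp_assoc)
    with s ss \<open>card (inversions n (inv (s \<circ> w))) < _\<close> show ?thesis
      by (intro exI[of _ "s # ss"]) auto
  next
    case False
    then have "inv w = id"
      by (intro permutes_ascending_eq_id[OF permutes_inv[OF less.prems]]) (use False in fastforce)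
    then have "w = id"
      by (metis inv_id permutes_inv_inv[OF less.prems])
    then show ?thesis
      by (intro exI[of _ "[]"]) simp
  qed
qed

lemma len_eq_card_inversions:
  assumes "w permutes {1..n}"
  shows "len n w = card (inversions n (inv w))"
proof -
  let ?word = "\<lambda>k. \<exists>ss. length ss = k \<and> set ss \<subseteq> simple_transpositions n
    \<and> w = foldr (\<circ>) ss id"
  obtain ss where "set ss \<subseteq> simple_transpositions n" "w = foldr (\<circ>) ss id"
      "length ss \<le> card (inversions n (inv w))"
    using exists_word_le_card_inversions[OF assms] by blast
  then have ss: "?word (length ss)" "length ss \<le> card (inversions n (inv w))"
    by blast+
  then have "len n w \<le> card (inversions n (inv w))"
    unfolding len_def using Least_le[of ?word] by fastforce
  moreover obtain ss' where "length ss' = len n w" "set ss' \<subseteq> simple_transpositions n"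
      "w = foldr (\<circ>) ss' id"
    using LeastI[of ?word, OF ss(1)] unfolding len_def by blast
  then have "card (inversions n (inv w)) \<le> len n w"
    using card_inversions_word_le by metis
  ultimately show ?thesis
    by simp
qed

lemma len_transpose_comp_less:
  assumes w: "w permutes {1..n}" and ab: "a < b" "a \<in> {1..n}" "b \<in> {1..n}"
    and "inv w b < inv w a"
  shows "len n (transpose a b \<circ> w) < len n w"
proof -
  have "transpose a b permutes {1..n}"
    using ab by (intro permutes_swap_id)
  then have "inv (transpose a b \<circ> w) = inv w \<circ> transpose a b"
    and "transpose a b \<circ> w permutes {1..n}"
    using o_inv_distrib[OF permutes_bij permutes_bij[OF w]] permutes_compose[OF w] by simp_all
  moreover have "card (inversions n (inv w \<circ> transpose a b))
      < card (inversions n (inv w \<circ> transpose a b \<circ> transpose a b))"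
    using assms by (intro card_inversions_less_transpose) auto
  ultimately show ?thesis
    using len_eq_card_inversions w by (simp add: comp_assoc)
qed

lemma bruhat_edgeE:
  assumes "bruhat_edge n w w'"
  obtains a b where "a < b" "w' = transpose a b \<circ> w" "inv w a < inv w b"
proof -
  have w: "w permutes {1..n}" and up: "len n w < len n w'"
    using assms by (auto simp: bruhat_edge_def Sym_def)
  obtain a0 b0 where t: "w' \<circ> inv w = transpose a0 b0" "a0 \<in> {1..n}" "b0 \<in> {1..n}"
      "a0 \<noteq> b0"
    using assms by (auto simp: bruhat_edge_def transpositions_def)
  define a where "a = min a0 b0"
  define b where "b = max a0 b0"
  have ab: "a < b" "a \<in> {1..n}" "b \<in> {1..n}" "transpose a b = transpose a0 b0"
    using t by (auto simp: a_def b_def min_def max_def transpose_commute)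
  have w': "w' = transpose a b \<circ> w"
    by (metis ab(4) t(1) comp_assoc comp_id permutes_inv_o(2)[OF w])
  have "inv w a \<noteq> inv w b"
    using permutes_inj[OF permutes_inv[OF w]] ab(1) by (metis injD less_irrefl)
  moreover have "\<not> inv w b < inv w a"
    using len_transpose_comp_less[OF w ab(1-3)] up w' by auto
  ultimately show ?thesis
    using that ab(1) w' by simp
qed

text \<open>With \<open>p = x\<^sup>-\<^sup>1\<close>, \<open>bruhat_factor p g a b\<close> says that \<open>x \<rightarrow> (a b) x \<rightarrow> g x\<close> is a path
  in the Bruhat graph.\<close>

definition bruhat_factor :: "(nat \<Rightarrow> nat) \<Rightarrow> (nat \<Rightarrow> nat) \<Rightarrow> nat \<Rightarrow> nat \<Rightarrow> bool" where
  "bruhat_factor p g a b \<longleftrightarrow> a < b \<and> p a < p b \<and>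
     (\<exists>c d. c < d \<and> g = transpose c d \<circ> transpose a b
        \<and> p (transpose a b c) < p (transpose a b d))"

lemma bruhat_factorE:
  assumes "bruhat_factor p g a b"
  obtains c d where "a < b" "c < d" "(c, d) \<noteq> (a, b)" "g = transpose c d \<circ> transpose a b"
    "p (transpose a b c) < p (transpose a b d)"
  using assms unfolding bruhat_factor_def by fastforce

lemma bruhat_factor_moves:
  assumes "bruhat_factor p g a b"
  shows "g a \<noteq> a" "g b \<noteq> b"
  using assms by (auto elim!: bruhat_factorE dest: transpose_comp_transpose_moves)

lemma three_cycle_not_all_bruhat_factors:
  fixes \<alpha> \<beta> \<gamma> :: nat
  assumes "\<alpha> < \<beta>" "\<beta> < \<gamma>" and "\<And>q. g q \<noteq> q \<Longrightarrow> q \<in> {\<alpha>, \<beta>, \<gamma>}"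
    and "bruhat_factor p g \<alpha> \<beta>" "bruhat_factor p g \<beta> \<gamma>"
  shows "\<not> bruhat_factor p g \<alpha> \<gamma>"
proof
  assume "bruhat_factor p g \<alpha> \<gamma>"
  then obtain c d
    where cd: "c < d" "(c, d) \<noteq> (\<alpha>, \<gamma>)" "g = transpose c d \<circ> transpose \<alpha> \<gamma>"
    and up: "p (transpose \<alpha> \<gamma> c) < p (transpose \<alpha> \<gamma> d)"
    by (rule bruhat_factorE)
  have "(c, d) = (\<alpha>, \<beta>) \<or> (c, d) = (\<beta>, \<gamma>)"
    using three_cycle_second_factor[OF assms(1,2) cd assms(3)] .
  moreover have "p \<alpha> < p \<beta>" "p \<beta> < p \<gamma>"
    using assms(4,5) by (auto simp: bruhat_factor_def)
  ultimately show False
    using up assms(1,2) by auto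
qed

lemma bruhat_factors_subset_pair:
  "\<exists>A B. {(a, b). bruhat_factor p g a b} \<subseteq> {A, B}"
proof (cases "\<exists>a b. bruhat_factor p g a b")
  case False
  then show ?thesis by auto
next
  case True
  then obtain a1 b1 where "bruhat_factor p g a1 b1" by blast
  then obtain c1 d1 where ab1: "a1 < b1" "c1 < d1" "(c1, d1) \<noteq> (a1, b1)"
    and g: "g = transpose c1 d1 \<circ> transpose a1 b1"
    by (rule bruhat_factorE)
  let ?S = "{a1, b1, c1, d1}"
  have supp: "q \<in> ?S" if "g q \<noteq> q" for q
    using transpose_comp_transpose_support[OF g that] .
  have factor_in_supp: "a < b" "a \<in> ?S" "b \<in> ?S" if "bruhat_factor p g a b" for a b
    using that supp bruhat_factor_moves[OF that] unfolding bruhat_factor_def by blast+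
  show ?thesis
  proof (cases "{a1, b1} \<inter> {c1, d1} = {}")
    case True
    have g_pairs: "g a1 = b1" "g b1 = a1" "g c1 = d1" "g d1 = c1"
      using True g by auto
    have "g (g q) = q" for q
      using True g by (auto simp: transpose_def)
    then have "(a, b) \<in> {(a1, b1), (c1, d1)}" if f: "bruhat_factor p g a b" for a b
    proof -
      obtain c d where "a < b" "c < d" "(c, d) \<noteq> (a, b)" "g = transpose c d \<circ> transpose a b"
        using f by (rule bruhat_factorE)
      then have "g a = b"
        using transpose_comp_transpose_involution \<open>\<And>q. g (g q) = q\<close> by blast
      then show ?thesis
        using factor_in_supp[OF f] g_pairs ab1(1,2) by auto
    qed
    then show ?thesis by blast
  next
    case False
    then have "card ?S = 3"
      using ab1 by (auto simp: card_insert_if)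
    then obtain \<alpha> \<beta> \<gamma> where abc: "\<alpha> < \<beta>" "\<beta> < \<gamma>" "?S = {\<alpha>, \<beta>, \<gamma>}"
      by (rule card_3_sorted)
    have "(a, b) \<in> {(\<alpha>, \<beta>), (\<beta>, \<gamma>), (\<alpha>, \<gamma>)}" if "bruhat_factor p g a b" for a b
      using factor_in_supp[OF that] abc by auto
    moreover have
      "\<not> (bruhat_factor p g \<alpha> \<beta> \<and> bruhat_factor p g \<beta> \<gamma> \<and> bruhat_factor p g \<alpha> \<gamma>)"
      using three_cycle_not_all_bruhat_factors[OF abc(1,2)] supp abc(3) by blast
    ultimately show ?thesis by blast
  qed
qed

lemma bruhat_two_step_pathE:
  assumes "bruhat_edge n x z" and "bruhat_edge n z y"
  obtains a b where "z = transpose a b \<circ> x" "bruhat_factor (inv x) (y \<circ> inv x) a b"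
proof -
  obtain a b where ab: "a < b" "z = transpose a b \<circ> x" "inv x a < inv x b"
    using assms(1) by (rule bruhat_edgeE)
  obtain c d where cd: "c < d" "y = transpose c d \<circ> z" "inv z c < inv z d"
    using assms(2) by (rule bruhat_edgeE)
  have x: "x permutes {1..n}"
    using assms(1) by (auto simp: bruhat_edge_def Sym_def)
  have "inv z = inv x \<circ> transpose a b"
    using ab(2) o_inv_distrib[OF bij_transpose permutes_bij[OF x]] by simp
  moreover have "y \<circ> inv x = transpose c d \<circ> transpose a b"
    using cd(2) ab(2) permutes_inv_o(1)[OF x] by (simp add: comp_assoc)
  ultimately have "bruhat_factor (inv x) (y \<circ> inv x) a b"
    using ab cd unfolding bruhat_factor_def by auto
  with ab(2) show ?thesis
    using that by blast
qed

lemma bruhat_middle_vertices_subset_pair: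
  "\<exists>z1 z2. {z. bruhat_edge n x z \<and> bruhat_edge n z y} \<subseteq> {z1, z2}"
proof -
  obtain A B where AB: "{(a, b). bruhat_factor (inv x) (y \<circ> inv x) a b} \<subseteq> {A, B}"
    using bruhat_factors_subset_pair by blast
  have "{z. bruhat_edge n x z \<and> bruhat_edge n z y}
      \<subseteq> (\<lambda>(a, b). transpose a b \<circ> x) ` {A, B}"
  proof clarify
    fix z
    assume "bruhat_edge n x z" "bruhat_edge n z y"
    then obtain a b where "z = transpose a b \<circ> x" "bruhat_factor (inv x) (y \<circ> inv x) a b"
      by (rule bruhat_two_step_pathE)
    then show "z \<in> (\<lambda>(a, b). transpose a b \<circ> x) ` {A, B}"
      using AB by force
  qed
  then show ?thesis
    by auto
qed

lemma flip_step_in_paths: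
  assumes "flip_step n h u v q q'"
  shows "q' \<in> paths n h u v"
proof -
  obtain i z where q: "q \<in> paths n h u v" and i: "1 \<le> i" "i \<le> h - 1"
    and e: "bruhat_edge n (q ! (i - 1)) z" "bruhat_edge n z (q ! (i + 1))"
    and q': "q' = q[i := z]"
    using assms unfolding flip_step_def by blast
  have "bruhat_edge n (q' ! j) (q' ! (j + 1))" if "j < h" for j
    using q that e i by (cases "j + 1 = i \<or> j = i") (auto simp: q' paths_def)
  then show ?thesis
    using q i by (auto simp: q' paths_def)
qed

lemma flipclass_subset_paths:
  assumes "flipclass n h u v F"
  shows "F \<subseteq> paths n h u v"
proof -
  obtain p where p: "p \<in> paths n h u v" and F: "F = {q. (flip_step n h u v)\<^sup>*\<^sup>* p q}"
    using assms unfolding flipclass_def by blast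
  have "q \<in> paths n h u v" if "(flip_step n h u v)\<^sup>*\<^sup>* p q" for q
    using that by (induction rule: rtranclp_induct) (use p flip_step_in_paths in auto)
  then show ?thesis
    using F by blast
qed

lemma ts_edge_imp_bruhat_edge:
  assumes "flipclass n h u v F" and "ts_edge h F (a, j) (b, k)"
  shows "bruhat_edge n a b"
  using assms flipclass_subset_paths[OF assms(1)] by (auto simp: ts_edge_def paths_def)

theorem lemma5p4:
  fixes n h i :: nat and u v x y :: "nat \<Rightarrow> nat"
    and F :: "(nat \<Rightarrow> nat) list set"
  assumes "1 \<le> i" and "i \<le> h - 1"
    and "u \<in> Sym n" and "v \<in> Sym n" and "bruhat_less n u v"
    and "flipclass n h u v F"
    and "ts_vertex h F (x, i - 1)" and "ts_vertex h F (y, i + 1)"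
  shows "finite {z. ts_edge h F (x, i - 1) (z, i) \<and> ts_edge h F (z, i) (y, i + 1)}
    \<and> card {z. ts_edge h F (x, i - 1) (z, i) \<and> ts_edge h F (z, i) (y, i + 1)} \<in> {0, 1, 2}"
proof -
  let ?T = "{z. ts_edge h F (x, i - 1) (z, i) \<and> ts_edge h F (z, i) (y, i + 1)}"
  obtain z1 z2 where "{z. bruhat_edge n x z \<and> bruhat_edge n z y} \<subseteq> {z1, z2}"
    using bruhat_middle_vertices_subset_pair by blast
  then have T: "?T \<subseteq> {z1, z2}"
    using ts_edge_imp_bruhat_edge[OF \<open>flipclass n h u v F\<close>] by blast
  then have "card ?T \<le> card {z1, z2}"
    by (intro card_mono) auto
  also have "\<dots> \<le> 2"
    by (simp add: card_insert_if)
  finally show ?thesis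
    using T finite_subset by auto
qed

end
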